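(* If $n\equiv 2\pmod 4$, then the graph $2Q_{n-1}$ is $\left(\frac{n(2^n+1)}{2}-2^n,\,1\right)$-distance antimagic. If $n\equiv 1\pmod 4$, then $2Q_{n-1}$ is $\left(\frac{(n+1)(2^n+1)}{2}-2^n,\,1\right)$-closed distance antimagic.
   Context: $Q_m$ is the $m$-dimensional hypercube (vertex set $\mathbb{F}_2^m$, adjacency iff differing in exactly one coordinate), and $2Q_{n-1}$ is the disjoint union of two copies of $Q_{n-1}$, a graph of order $2^n$. For a graph $G$ of order $N$, a set of distances $D$, and a bijection $f:V(G)\to\{1,\dots,N\}$, the weight of $x$ is $w(x)=\sum_{y\in N_D(x)}f(y)$ where $N_D(x)$ is the set of vertices at distance in $D$ from $x$. $f$ is an $(\alpha,\delta)$-$D$-antimagic labeling if the weights are pairwise distinct and $\{w(x)\}$ forms an arithmetic progression starting at $\alpha$ with difference $\delta>0$; a graph is $(\alpha,\delta)$-distance antimagic (resp. $(\alpha,\delta)$-closed distance antimagic) if it admits such a labeling with $D=\{1\}$ (resp. $D=\{0,1\}$). *)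

theory Defs
  imports Main
begin

definition has_walk :: "'a set \<Rightarrow> ('a \<Rightarrow> 'a \<Rightarrow> bool) \<Rightarrow> 'a \<Rightarrow> 'a \<Rightarrow> nat \<Rightarrow> bool" where
  "has_walk V E x y k \<longleftrightarrow>
     (\<exists>p. p 0 = x \<and> p k = y \<and> (\<forall>i\<le>k. p i \<in> V) \<and> (\<forall>i<k. E (p i) (p (Suc i))))"

definition dist_is :: "'a set \<Rightarrow> ('a \<Rightarrow> 'a \<Rightarrow> bool) \<Rightarrow> 'a \<Rightarrow> 'a \<Rightarrow> nat \<Rightarrow> bool" where
  "dist_is V E x y d \<longleftrightarrow> has_walk V E x y d \<and> (\<forall>k<d. \<not> has_walk V E x y k)"

definition dist_nbhd :: "'a set \<Rightarrow> ('a \<Rightarrow> 'a \<Rightarrow> bool) \<Rightarrow> nat set \<Rightarrow> 'a \<Rightarrow> 'a set" where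
  "dist_nbhd V E D x = {y \<in> V. \<exists>d\<in>D. dist_is V E x y d}"

definition weight :: "'a set \<Rightarrow> ('a \<Rightarrow> 'a \<Rightarrow> bool) \<Rightarrow> nat set \<Rightarrow> ('a \<Rightarrow> nat) \<Rightarrow> 'a \<Rightarrow> int" where
  "weight V E D f x = (\<Sum>y\<in>dist_nbhd V E D x. int (f y))"

definition D_antimagic_labeling ::
  "'a set \<Rightarrow> ('a \<Rightarrow> 'a \<Rightarrow> bool) \<Rightarrow> nat set \<Rightarrow> ('a \<Rightarrow> nat) \<Rightarrow> int \<Rightarrow> int \<Rightarrow> bool" where
  "D_antimagic_labeling V E D f \<alpha> \<delta> \<longleftrightarrow>
     bij_betw f V {1..card V} \<and> \<delta> > 0 \<and>
     inj_on (weight V E D f) V \<and>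
     weight V E D f ` V = {\<alpha> + int k * \<delta> | k. k < card V}"

definition distance_antimagic :: "'a set \<Rightarrow> ('a \<Rightarrow> 'a \<Rightarrow> bool) \<Rightarrow> int \<Rightarrow> int \<Rightarrow> bool" where
  "distance_antimagic V E \<alpha> \<delta> \<longleftrightarrow> (\<exists>f. D_antimagic_labeling V E {1} f \<alpha> \<delta>)"

definition closed_distance_antimagic :: "'a set \<Rightarrow> ('a \<Rightarrow> 'a \<Rightarrow> bool) \<Rightarrow> int \<Rightarrow> int \<Rightarrow> bool" where
  "closed_distance_antimagic V E \<alpha> \<delta> \<longleftrightarrow> (\<exists>f. D_antimagic_labeling V E {0,1} f \<alpha> \<delta>)"

text \<open>Q_m: vertices are subsets of {0..<m} (characteristic vectors in F_2^m);
  adjacent iff they differ in exactly one coordinate.\<close>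
definition hypercube_verts :: "nat \<Rightarrow> nat set set" where
  "hypercube_verts m = Pow {..<m}"

definition hypercube_adj :: "nat set \<Rightarrow> nat set \<Rightarrow> bool" where
  "hypercube_adj A B \<longleftrightarrow> card ((A - B) \<union> (B - A)) = 1"

definition twoQ_verts :: "nat \<Rightarrow> (bool \<times> nat set) set" where
  "twoQ_verts m = UNIV \<times> hypercube_verts m"

definition twoQ_adj :: "bool \<times> nat set \<Rightarrow> bool \<times> nat set \<Rightarrow> bool" where
  "twoQ_adj u v \<longleftrightarrow> fst u = fst v \<and> hypercube_adj (snd u) (snd v)"

end

theory Submission
  imports Defs
begin

(*
  Write a vertex of 2Q_m as (c, x), with c the copy and x a subset of {0..<m}.  The label of
  (c, x) is 1 plus the binary number whose digit k (k <= m) is the parity of |x Int S_k|, XORed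
  with c for k = m, where S_k = parity_set r m k.  For even r with 2r <= m these m + 1 linear
  forms over F_2 are independent, so the labelling is a bijection onto {1..2^(m+1)}.

  Flipping coordinate i toggles digit k exactly when i is in S_k, so among the m neighbours of
  (c, x) digit k is set in |S_k| or in m - |S_k| of them, according as it is clear or set at
  (c, x).  Since |S_k| = r + 1 for k < m and |S_m| = r, for m = 2r + 1 every digit of the weight
  is r or r + 1, and which one is read off from the digits of (c, x) (complemented below m).
  Hence the weights are a constant plus a number that again runs bijectively over
  {0..<2^(m+1)}.  For the closed neighbourhood and m = 2r, the label of (c, x) itself restores
  the same pattern.
*)

lemma has_walk_0_iff: "has_walk V E x y 0 \<longleftrightarrow> x \<in> V \<and> y = x"
  unfolding has_walk_def by auto

lemma has_walk_1_iff: "has_walk V E x y 1 \<longleftrightarrow> x \<in> V \<and> y \<in> V \<and> E x y"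
proof
  assume "has_walk V E x y 1"
  then obtain p where p: "p 0 = x" "p 1 = y" "\<forall>i\<le>1. p i \<in> V" "\<forall>i<1. E (p i) (p (Suc i))"
    unfolding has_walk_def by blast
  then show "x \<in> V \<and> y \<in> V \<and> E x y"
    using p(3)[rule_format, of 0] p(3)[rule_format, of 1] p(4)[rule_format, of 0] by simp
next
  assume "x \<in> V \<and> y \<in> V \<and> E x y"
  then show "has_walk V E x y 1"
    unfolding has_walk_def by (intro exI[of _ "\<lambda>k. if k = 0 then x else y"]) (auto simp: le_Suc_eq)
qed

lemma dist_is_0_iff: "dist_is V E x y 0 \<longleftrightarrow> x \<in> V \<and> y = x"
  unfolding dist_is_def has_walk_0_iff by simp

lemma dist_is_1_iff: "dist_is V E x y 1 \<longleftrightarrow> x \<in> V \<and> y \<in> V \<and> E x y \<and> y \<noteq> x"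
  unfolding dist_is_def has_walk_1_iff by (auto simp: has_walk_0_iff)

lemma dist_nbhd_1: "x \<in> V \<Longrightarrow> dist_nbhd V E {1} x = {y \<in> V. E x y \<and> y \<noteq> x}"
  unfolding dist_nbhd_def by (auto simp del: One_nat_def simp add: dist_is_1_iff)

lemma dist_nbhd_0_1: "x \<in> V \<Longrightarrow> dist_nbhd V E {0, 1} x = insert x (dist_nbhd V E {1} x)"
  unfolding dist_nbhd_def by (auto simp: dist_is_0_iff)

lemma D_antimagic_labelingI:
  assumes f: "bij_betw f V {1..card V}"
    and h: "bij_betw h V {..<card V}"
    and weight: "\<And>v. v \<in> V \<Longrightarrow> weight V E D f v = \<alpha> + int (h v)"
  shows "D_antimagic_labeling V E D f \<alpha> 1"
proof -
  have "inj_on (weight V E D f) V"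
    using bij_betw_imp_inj_on[OF h] by (auto simp: inj_on_def weight)
  moreover have "weight V E D f ` V = (\<lambda>k. \<alpha> + int k) ` h ` V"
    by (auto simp: weight image_image cong: image_cong)
  ultimately show ?thesis
    using f bij_betw_imp_surj_on[OF h] unfolding D_antimagic_labeling_def by auto
qed

definition flip :: "nat \<Rightarrow> nat set \<Rightarrow> nat set" where
  "flip i x = (if i \<in> x then x - {i} else insert i x)"

lemma flip_neq: "flip i x \<noteq> x"
  unfolding flip_def by auto

lemma inj_flip: "inj (\<lambda>i. flip i x)"
  unfolding flip_def inj_def by (auto split: if_splits)

lemma flip_subset_lessThan_iff: "x \<subseteq> {..<m} \<Longrightarrow> flip i x \<subseteq> {..<m} \<longleftrightarrow> i < m"
  unfolding flip_def by auto

lemma mem_flip_iff: "j \<in> flip i x \<longleftrightarrow> (j \<in> x) \<noteq> (j = i)"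
  unfolding flip_def by auto

lemma hypercube_adj_iff_flip: "hypercube_adj x y \<longleftrightarrow> (\<exists>i. y = flip i x)"
proof
  assume "hypercube_adj x y"
  then obtain i where i: "sym_diff x y = {i}"
    unfolding hypercube_adj_def by (metis One_nat_def card_1_singleton_iff)
  have "j \<in> y \<longleftrightarrow> j \<in> flip i x" for j
    using arg_cong[OF i, of "\<lambda>A. j \<in> A"] unfolding mem_flip_iff by blast
  then show "\<exists>i. y = flip i x"
    by blast
next
  assume "\<exists>i. y = flip i x"
  then obtain i where "y = flip i x" ..
  then have "sym_diff x y = {i}"
    by (auto simp: mem_flip_iff)
  then show "hypercube_adj x y"
    unfolding hypercube_adj_def by simp
qed

lemma finite_twoQ_verts: "finite (twoQ_verts m)"
  unfolding twoQ_verts_def hypercube_verts_def by simp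

lemma card_twoQ_verts: "card (twoQ_verts m) = 2 ^ Suc m"
  unfolding twoQ_verts_def hypercube_verts_def by (simp add: card_cartesian_product card_Pow)

lemma twoQ_adj_iff_flip:
  assumes "x \<subseteq> {..<m}"
  shows "y \<in> twoQ_verts m \<and> twoQ_adj (c, x) y \<longleftrightarrow> (\<exists>i<m. y = (c, flip i x))"
  using assms
  by (cases y) (auto simp: twoQ_verts_def hypercube_verts_def twoQ_adj_def
      hypercube_adj_iff_flip flip_subset_lessThan_iff mem_flip_iff)

lemma twoQ_dist_nbhd_1:
  assumes "(c, x) \<in> twoQ_verts m"
  shows "dist_nbhd (twoQ_verts m) twoQ_adj {1} (c, x) = (\<lambda>i. (c, flip i x)) ` {..<m}"
proof -
  have "x \<subseteq> {..<m}"
    using assms by (simp add: twoQ_verts_def hypercube_verts_def)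
  then show ?thesis
    unfolding dist_nbhd_1[OF assms] using twoQ_adj_iff_flip flip_neq by blast
qed

lemma twoQ_weight_1:
  assumes "(c, x) \<in> twoQ_verts m"
  shows "weight (twoQ_verts m) twoQ_adj {1} f (c, x) = (\<Sum>i<m. int (f (c, flip i x)))"
  unfolding weight_def twoQ_dist_nbhd_1[OF assms]
  by (simp add: sum.reindex inj_on_def inj_eq[OF inj_flip])

lemma twoQ_weight_0_1:
  assumes "(c, x) \<in> twoQ_verts m"
  shows "weight (twoQ_verts m) twoQ_adj {0, 1} f (c, x) = int (f (c, x)) + (\<Sum>i<m. int (f (c, flip i x)))"
proof -
  have "(c, x) \<notin> dist_nbhd (twoQ_verts m) twoQ_adj {1} (c, x)"
    unfolding twoQ_dist_nbhd_1[OF assms] using flip_neq by auto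
  moreover have "finite (dist_nbhd (twoQ_verts m) twoQ_adj {1} (c, x))"
    unfolding twoQ_dist_nbhd_1[OF assms] by simp
  ultimately show ?thesis
    using twoQ_weight_1[OF assms, of f] unfolding weight_def dist_nbhd_0_1[OF assms] by simp
qed

definition binary_value :: "nat \<Rightarrow> (nat \<Rightarrow> bool) \<Rightarrow> nat" where
  "binary_value n b = (\<Sum>k<n. of_bool (b k) * 2 ^ k)"

lemma binary_value_eq_horner_sum: "binary_value n b = horner_sum of_bool 2 (map b [0..<n])"
  by (simp add: binary_value_def horner_sum_eq_sum lessThan_atLeast0)

lemma binary_value_less: "binary_value n b < 2 ^ n"
  using horner_sum_of_bool_2_less[of "map b [0..<n]"] by (simp add: binary_value_eq_horner_sum)

lemma bit_binary_value_iff: "bit (binary_value n b) k \<longleftrightarrow> k < n \<and> b k"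
  by (auto simp: binary_value_eq_horner_sum bit_horner_sum_bit_iff)

lemma binary_value_eq_iff: "binary_value n a = binary_value n b \<longleftrightarrow> (\<forall>k<n. a k = b k)"
proof
  assume "binary_value n a = binary_value n b"
  then have "bit (binary_value n a) k \<longleftrightarrow> bit (binary_value n b) k" for k
    by simp
  then show "\<forall>k<n. a k = b k"
    unfolding bit_binary_value_iff by blast
qed (simp add: binary_value_def)

lemma bij_betw_binary_value:
  assumes "finite V" "card V = 2 ^ n"
    and separating: "\<And>v w. v \<in> V \<Longrightarrow> w \<in> V \<Longrightarrow> \<forall>k<n. a v k = a w k \<Longrightarrow> v = w"
  shows "bij_betw (\<lambda>v. binary_value n (a v)) V {..<2 ^ n}"
proof -
  have inj: "inj_on (\<lambda>v. binary_value n (a v)) V"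
    by (rule inj_onI) (simp add: binary_value_eq_iff separating)
  moreover have "(\<lambda>v. binary_value n (a v)) ` V \<subseteq> {..<2 ^ n}"
    using binary_value_less by auto
  moreover have "card ((\<lambda>v. binary_value n (a v)) ` V) = card {..<(2::nat) ^ n}"
    using card_image[OF inj] assms(2) by simp
  ultimately show ?thesis
    unfolding bij_betw_def by (simp add: card_subset_eq)
qed

lemma sum_binary_value:
  "finite I \<Longrightarrow> (\<Sum>i\<in>I. binary_value n (b i)) = (\<Sum>k<n. card {i \<in> I. b i k} * 2 ^ k)"
  unfolding binary_value_def
  by (subst sum.swap) (simp add: sum_distrib_right[symmetric] Int_def conj_commute)

lemma binary_value_offset:
  "(\<Sum>k<n. (r + of_bool (e k)) * 2 ^ k) = r * (2 ^ n - 1) + binary_value n e"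
  by (simp add: binary_value_def distrib_right sum.distrib sum_distrib_left[symmetric]
      sum_power2 lessThan_atLeast0)

lemma odd_card_Int_insert:
  "finite S \<Longrightarrow> i \<notin> S \<Longrightarrow> odd (card (x \<inter> insert i S)) \<longleftrightarrow> (i \<in> x) \<noteq> odd (card (x \<inter> S))"
  by (cases "i \<in> x") (auto simp: Int_insert_right)

lemma flip_Int_eq: "i \<notin> S \<Longrightarrow> flip i x \<inter> S = x \<inter> S"
  by (auto simp: mem_flip_iff)

lemma odd_card_flip_Int:
  assumes "finite S"
  shows "odd (card (flip i x \<inter> S)) \<longleftrightarrow> (i \<in> S) \<noteq> odd (card (x \<inter> S))"
proof (cases "i \<in> S")
  case True
  have split: "odd (card (y \<inter> S)) \<longleftrightarrow> (i \<in> y) \<noteq> odd (card (y \<inter> (S - {i})))" for y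
    using odd_card_Int_insert[of "S - {i}" i y] assms True by (simp add: insert_absorb)
  show ?thesis
    using split[of "flip i x"] split[of x] True by (simp add: flip_Int_eq mem_flip_iff)
qed (simp add: flip_Int_eq)

lemma card_flip_parity:
  assumes "S \<subseteq> {..<m}"
  shows "card {i \<in> {..<m}. c \<noteq> odd (card (flip i x \<inter> S))}
    = (if c \<noteq> odd (card (x \<inter> S)) then m - card S else card S)"
proof -
  have "finite S"
    using assms finite_subset by blast
  then have "{i \<in> {..<m}. c \<noteq> odd (card (flip i x \<inter> S))}
      = (if c \<noteq> odd (card (x \<inter> S)) then {..<m} - S else S)"
    using assms by (auto simp: odd_card_flip_Int)
  then show ?thesis
    using assms by (simp add: card_Diff_subset finite_subset)
qed

lemma odd_card_Int_eq_if_even_card: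
  assumes "finite A" "even (card A)" and xor: "\<forall>i\<in>A. ((i \<in> x) \<noteq> a) = ((i \<in> y) \<noteq> b)"
  shows "odd (card (x \<inter> A)) = odd (card (y \<inter> A))"
proof (cases "a = b")
  case True
  then have "x \<inter> A = y \<inter> A"
    using xor by blast
  then show ?thesis by simp
next
  case False
  then have "y \<inter> A = A - x \<inter> A"
    using xor by blast
  moreover have "card (x \<inter> A) \<le> card A"
    using assms(1) by (simp add: card_mono)
  ultimately show ?thesis
    using assms(1,2) by (simp add: card_Diff_subset)
qed

definition parity_set :: "nat \<Rightarrow> nat \<Rightarrow> nat \<Rightarrow> nat set" where
  "parity_set r m k =
     (if k < r then insert k {r..<2 * r} else if k < m then insert k {..<r} else {..<r})"

definition label_bit :: "nat \<Rightarrow> nat \<Rightarrow> nat \<Rightarrow> bool \<times> nat set \<Rightarrow> bool" where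
  "label_bit r m k v \<longleftrightarrow> (k = m \<and> fst v) \<noteq> odd (card (snd v \<inter> parity_set r m k))"

definition label :: "nat \<Rightarrow> nat \<Rightarrow> bool \<times> nat set \<Rightarrow> nat" where
  "label r m v = Suc (binary_value (Suc m) (\<lambda>k. label_bit r m k v))"

definition weight_rank :: "nat \<Rightarrow> nat \<Rightarrow> bool \<times> nat set \<Rightarrow> nat" where
  "weight_rank r m v = binary_value (Suc m) (\<lambda>k. label_bit r m k v \<longleftrightarrow> k = m)"

lemma parity_set_subset: "2 * r \<le> m \<Longrightarrow> parity_set r m k \<subseteq> {..<m}"
  unfolding parity_set_def by auto

lemma card_parity_set: "2 * r \<le> m \<Longrightarrow> card (parity_set r m k) = (if k < m then Suc r else r)"
  unfolding parity_set_def by auto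

lemma eq_if_label_bits_eq:
  assumes r: "even r" "2 * r \<le> m"
    and vw: "v \<in> twoQ_verts m" "w \<in> twoQ_verts m"
    and bits: "\<forall>k<Suc m. label_bit r m k v = label_bit r m k w"
  shows "v = w"
proof -
  obtain c x c' x' where cx: "v = (c, x)" "w = (c', x')"
    by fastforce
  (* Digits k >= r determine x on [r, m) up to complementation; as r is even this fixes the
     parity on [r, 2r), and then digits k < r determine x on [0, r). *)
  define a where "a = odd (card (x \<inter> {..<r}))"
  define a' where "a' = odd (card (x' \<inter> {..<r}))"
  have bit: "odd (card (x \<inter> parity_set r m k)) \<longleftrightarrow> odd (card (x' \<inter> parity_set r m k))"
    if "k < m" for k
    using bits[rule_format, of k] that unfolding label_bit_def cx by simp
  have high: "((i \<in> x) \<noteq> a) = ((i \<in> x') \<noteq> a')" if "r \<le> i" "i < m" for i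
    using bit[OF \<open>i < m\<close>] that by (simp add: parity_set_def odd_card_Int_insert a_def a'_def)
  have "odd (card (x \<inter> {r..<2 * r})) = odd (card (x' \<inter> {r..<2 * r}))"
    using r high by (intro odd_card_Int_eq_if_even_card[where a = a and b = a']) auto
  then have low: "i \<in> x \<longleftrightarrow> i \<in> x'" if "i < r" for i
    using bit[of i] that r(2) by (simp add: parity_set_def odd_card_Int_insert) blast
  then have "x \<inter> {..<r} = x' \<inter> {..<r}"
    by blast
  then have "a = a'"
    unfolding a_def a'_def by simp
  then have "i \<in> x \<longleftrightarrow> i \<in> x'" if "i < m" for i
    using low[of i] high[of i] that by (cases "i < r") auto
  moreover have "x \<subseteq> {..<m}" "x' \<subseteq> {..<m}"
    using vw by (auto simp: cx twoQ_verts_def hypercube_verts_def)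
  ultimately have "x = x'"
    by blast
  moreover have "c = c'"
    using bits[rule_format, of m] \<open>x = x'\<close> unfolding label_bit_def cx by simp blast
  ultimately show ?thesis
    by (simp add: cx)
qed

lemma bij_betw_label:
  assumes "even r" "2 * r \<le> m"
  shows "bij_betw (label r m) (twoQ_verts m) {1..card (twoQ_verts m)}"
proof -
  have "bij_betw (\<lambda>v. binary_value (Suc m) (\<lambda>k. label_bit r m k v)) (twoQ_verts m) {..<2 ^ Suc m}"
    using eq_if_label_bits_eq[OF assms]
    by (intro bij_betw_binary_value finite_twoQ_verts card_twoQ_verts) blast
  moreover have "bij_betw Suc {..<2 ^ Suc m} {1..2 ^ Suc m}"
    by (simp add: bij_betw_def image_Suc_lessThan)
  ultimately have "bij_betw (Suc \<circ> (\<lambda>v. binary_value (Suc m) (\<lambda>k. label_bit r m k v)))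
      (twoQ_verts m) {1..2 ^ Suc m}"
    by (rule bij_betw_trans)
  then show ?thesis
    by (simp add: card_twoQ_verts comp_def label_def[abs_def])
qed

lemma bij_betw_weight_rank:
  assumes "even r" "2 * r \<le> m"
  shows "bij_betw (weight_rank r m) (twoQ_verts m) {..<card (twoQ_verts m)}"
  unfolding weight_rank_def[abs_def] card_twoQ_verts
proof (rule bij_betw_binary_value[OF finite_twoQ_verts card_twoQ_verts])
  fix v w
  assume "v \<in> twoQ_verts m" "w \<in> twoQ_verts m"
    and "\<forall>k<Suc m. (label_bit r m k v \<longleftrightarrow> k = m) = (label_bit r m k w \<longleftrightarrow> k = m)"
  then show "v = w"
    using eq_if_label_bits_eq[OF assms] by blast
qed

lemma card_flip_label_bit:
  assumes "2 * r \<le> m"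
  shows "card {i \<in> {..<m}. label_bit r m k (c, flip i x)}
    = (if label_bit r m k (c, x) then m - card (parity_set r m k) else card (parity_set r m k))"
  unfolding label_bit_def using card_flip_parity[OF parity_set_subset[OF assms]] by simp

lemma sum_label_flip:
  "(\<Sum>i<m. label r m (c, flip i x))
    = m + (\<Sum>k<Suc m. card {i \<in> {..<m}. label_bit r m k (c, flip i x)} * 2 ^ k)"
  unfolding label_def sum_Suc by (simp add: sum_binary_value)

lemma sum_label_flip_eq_weight_rank:
  assumes "m = 2 * r + 1"
  shows "(\<Sum>i<m. label r m (c, flip i x)) = m + r * (2 ^ Suc m - 1) + weight_rank r m (c, x)"
proof -
  have "card {i \<in> {..<m}. label_bit r m k (c, flip i x)} = r + of_bool (label_bit r m k (c, x) \<longleftrightarrow> k = m)"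
    if "k < Suc m" for k
    using card_flip_label_bit[of r m k c x] that assms by (simp add: card_parity_set)
  then have "(\<Sum>k<Suc m. card {i \<in> {..<m}. label_bit r m k (c, flip i x)} * 2 ^ k)
      = (\<Sum>k<Suc m. (r + of_bool (label_bit r m k (c, x) \<longleftrightarrow> k = m)) * 2 ^ k)"
    by (intro sum.cong) simp_all
  then show ?thesis
    by (simp add: sum_label_flip binary_value_offset weight_rank_def)
qed

lemma label_plus_sum_label_flip_eq_weight_rank:
  assumes "m = 2 * r"
  shows "label r m (c, x) + (\<Sum>i<m. label r m (c, flip i x))
    = Suc m + r * (2 ^ Suc m - 1) + weight_rank r m (c, x)"
proof -
  have "of_bool (label_bit r m k (c, x)) + card {i \<in> {..<m}. label_bit r m k (c, flip i x)}
      = r + of_bool (label_bit r m k (c, x) \<longleftrightarrow> k = m)"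
    if "k < Suc m" for k
    using card_flip_label_bit[of r m k c x] that assms by (simp add: card_parity_set)
  then have digits: "(\<Sum>k<Suc m. of_bool (label_bit r m k (c, x)) * 2 ^ k)
        + (\<Sum>k<Suc m. card {i \<in> {..<m}. label_bit r m k (c, flip i x)} * 2 ^ k)
      = (\<Sum>k<Suc m. (r + of_bool (label_bit r m k (c, x) \<longleftrightarrow> k = m)) * 2 ^ k)"
    unfolding sum.distrib[symmetric] distrib_right[symmetric] by (intro sum.cong) simp_all
  have "label r m (c, x) + (\<Sum>i<m. label r m (c, flip i x))
      = Suc m + ((\<Sum>k<Suc m. of_bool (label_bit r m k (c, x)) * 2 ^ k)
        + (\<Sum>k<Suc m. card {i \<in> {..<m}. label_bit r m k (c, flip i x)} * 2 ^ k))"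
    using sum_label_flip[of r m c x] unfolding label_def binary_value_def by linarith
  also have "\<dots> = Suc m + r * (2 ^ Suc m - 1) + weight_rank r m (c, x)"
    unfolding digits binary_value_offset weight_rank_def by simp
  finally show ?thesis .
qed

lemma twoQ_distance_antimagic:
  assumes "even r" "m = 2 * r + 1"
  shows "distance_antimagic (twoQ_verts m) twoQ_adj (int m + int r * (2 ^ Suc m - 1)) 1"
proof -
  have "weight (twoQ_verts m) twoQ_adj {1} (label r m) v
      = int m + int r * (2 ^ Suc m - 1) + int (weight_rank r m v)"
    if "v \<in> twoQ_verts m" for v
  proof -
    obtain c x where v: "v = (c, x)"
      by fastforce
    have "weight (twoQ_verts m) twoQ_adj {1} (label r m) v = int (\<Sum>i<m. label r m (c, flip i x))"
      using twoQ_weight_1 that unfolding v by simp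
    then show ?thesis
      unfolding sum_label_flip_eq_weight_rank[OF assms(2)] v by (simp add: of_nat_diff)
  qed
  moreover have "2 * r \<le> m"
    using assms(2) by simp
  ultimately show ?thesis
    unfolding distance_antimagic_def
    using D_antimagic_labelingI[OF bij_betw_label bij_betw_weight_rank] assms(1) by blast
qed

lemma twoQ_closed_distance_antimagic:
  assumes "even r" "m = 2 * r"
  shows "closed_distance_antimagic (twoQ_verts m) twoQ_adj (int m + 1 + int r * (2 ^ Suc m - 1)) 1"
proof -
  have "weight (twoQ_verts m) twoQ_adj {0, 1} (label r m) v
      = int m + 1 + int r * (2 ^ Suc m - 1) + int (weight_rank r m v)"
    if "v \<in> twoQ_verts m" for v
  proof -
    obtain c x where v: "v = (c, x)"
      by fastforce
    have "weight (twoQ_verts m) twoQ_adj {0, 1} (label r m) v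
        = int (label r m (c, x) + (\<Sum>i<m. label r m (c, flip i x)))"
      using twoQ_weight_0_1 that unfolding v by simp
    then show ?thesis
      unfolding label_plus_sum_label_flip_eq_weight_rank[OF assms(2)] v by (simp add: of_nat_diff)
  qed
  moreover have "2 * r \<le> m"
    using assms(2) by simp
  ultimately show ?thesis
    unfolding closed_distance_antimagic_def
    using D_antimagic_labelingI[OF bij_betw_label bij_betw_weight_rank] assms(1) by blast
qed

theorem theorem3p11:
  fixes n :: nat
  shows "(n mod 4 = 2 \<longrightarrow>
            distance_antimagic (twoQ_verts (n - 1)) twoQ_adj
              (int n * (2 ^ n + 1) div 2 - 2 ^ n) 1)
       \<and> (n mod 4 = 1 \<longrightarrow>
            closed_distance_antimagic (twoQ_verts (n - 1)) twoQ_adj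
              ((int n + 1) * (2 ^ n + 1) div 2 - 2 ^ n) 1)"
proof (intro conjI impI)
  assume "n mod 4 = 2"
  define r where "r = 2 * (n div 4)"
  have r: "even r" "n = Suc (Suc (2 * r))"
    using \<open>n mod 4 = 2\<close> unfolding r_def by presburger+
  have "int n * (2 ^ n + 1) div 2 - 2 ^ n = int (n - 1) + int r * (2 ^ Suc (n - 1) - 1)"
    unfolding r(2) by (simp add: algebra_simps)
  then show "distance_antimagic (twoQ_verts (n - 1)) twoQ_adj (int n * (2 ^ n + 1) div 2 - 2 ^ n) 1"
    using twoQ_distance_antimagic[of r "n - 1"] r by simp
next
  assume "n mod 4 = 1"
  define r where "r = 2 * (n div 4)"
  have r: "even r" "n = Suc (2 * r)"
    using \<open>n mod 4 = 1\<close> unfolding r_def by presburger+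
  have "(int n + 1) * (2 ^ n + 1) div 2 - 2 ^ n = int (n - 1) + 1 + int r * (2 ^ Suc (n - 1) - 1)"
    unfolding r(2) by (simp add: algebra_simps)
  then show "closed_distance_antimagic (twoQ_verts (n - 1)) twoQ_adj ((int n + 1) * (2 ^ n + 1) div 2 - 2 ^ n) 1"
    using twoQ_closed_distance_antimagic[of r "n - 1"] r by simp
qed

end
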